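(* Let $k,\ell \geq 0$ be integers and let $F$ be a field of characteristic zero. For $n \ge 0$ let $H_n(k,\ell)$ be the set of partitions $\lambda=(\lambda_1,\dots,\lambda_m)$ of $n$ such that $\lambda_{k+i} \le \ell$ for all $i=1,\dots,m-k$ (i.e. partitions whose Young diagram fits inside the $(k,\ell)$-hook). For a partition $\lambda$, define the hook Schur function $$HS_\lambda(x_1,\dots,x_k;y_1,\dots,y_\ell) = \sum_{\mu \subseteq \lambda} s_\mu(x_1,\dots,x_k)\, s_{\lambda'/\mu'}(y_1,\dots,y_\ell),$$ where $s_\nu$ denotes the (skew) Schur polynomial and $\lambda'/\mu'$ is the conjugate of the skew shape $\lambda/\mu$. Let $\Lambda_n^{(k,\ell)} = \mathrm{span}_F\{HS_\lambda(x_1,\dots,x_k;y_1,\dots,y_\ell) : \lambda \in H_n(k,\ell)\}$ and $\Lambda^{(k,\ell)} = \bigoplus_{n \ge 0} \Lambda_n^{(k,\ell)}$. Let $G_{k,\ell}(t) = \sum_{n\ge 0} |H_n(k,\ell)|\, t^n$ be the generating function of partitions fitting in the $(k,\ell)$-hook, which equals the Hilbert series $\sum_{n \ge 0} \dim_F \Lambda_n^{(k,\ell)}\, t^n$ of $\Lambda^{(k,\ell)}$. Then $$G_{k,\ell}(t) = A^{k,\ell}(t) \prod_{i=1}^{k+\ell} \frac{1}{1-t^i},$$ where $$A^{k,\ell}(t) = 1 + \sum_{i=1}^{\ell} t^{i(k+\ell+1)} \begin{bmatrix} k \\ i \end{bmatrix}_t \sum_{j=0}^{\ell-i} t^{j(k-i+1)}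 \begin{bmatrix} i+j-1 \\ j \end{bmatrix}_t .$$
   Context: For integers $a,b$, the $t$-binomial coefficient is $\begin{bmatrix} a \\ b \end{bmatrix}_t = \frac{(t;t)_a}{(t;t)_b (t;t)_{a-b}}$ when $0 \le b \le a$ and $0$ otherwise, where $(x;t)_n = (1-x)(1-xt)\cdots(1-xt^{n-1})$ and $(x;t)_0=1$. Equivalently, $A^{k,\ell}(t)$ is determined by $A^{k,0}(t)=1$ and $A^{k,\ell}(t) = (1-t^{k+\ell})A^{k,\ell-1}(t) + t^{\ell(k+1)}\begin{bmatrix} k+\ell \\ \ell \end{bmatrix}_t$ for $\ell\ge1$. The hook Schur functions $HS_\lambda$ with $\lambda\in H_n(k,\ell)$ are linearly independent (Berele–Regev), so $\dim_F\Lambda_n^{(k,\ell)} = |H_n(k,\ell)|$. *)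

theory Defs
  imports "HOL-Computational_Algebra.Formal_Power_Series"
begin

text \<open>Integer partitions of n, as weakly decreasing lists of positive integers
  summing to n (lambda_1 = lam ! 0, ...).\<close>
definition is_partition :: "nat \<Rightarrow> nat list \<Rightarrow> bool" where
  "is_partition n lam \<longleftrightarrow> sorted_wrt (\<ge>) lam \<and> 0 \<notin> set lam \<and> sum_list lam = n"

text \<open>H_n(k,l): partitions of n with lambda_{k+i} <= l for all i = 1..m-k
  (0-based: every entry at index >= k is <= l).\<close>
definition hook_partitions :: "nat \<Rightarrow> nat \<Rightarrow> nat \<Rightarrow> nat list set" where
  "hook_partitions n k l =
     {lam. is_partition n lam \<and> (\<forall>i. k \<le> i \<and> i < length lam \<longrightarrow> lam ! i \<le> l)}"

definition G_hook :: "nat \<Rightarrow> nat \<Rightarrow> rat fps" where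
  "G_hook k l = Abs_fps (\<lambda>n. of_nat (card (hook_partitions n k l)))"

definition tpoch :: "nat \<Rightarrow> rat fps" where
  "tpoch n = (\<Prod>i<n. 1 - fps_X ^ (i + 1))"

definition tbinom :: "nat \<Rightarrow> nat \<Rightarrow> rat fps" where
  "tbinom a b = (if b \<le> a then tpoch a / (tpoch b * tpoch (a - b)) else 0)"

definition A_hook :: "nat \<Rightarrow> nat \<Rightarrow> rat fps" where
  "A_hook k l = 1 + (\<Sum>i = 1..l. fps_X ^ (i * (k + l + 1)) * tbinom k i *
      (\<Sum>j = 0..l - i. fps_X ^ (j * (k - i + 1)) * tbinom (i + j - 1) j))"

end

theory Submission
  imports Defs
begin

text \<open>Sort the partitions in the \<open>(k,l)\<close>-hook by their part \<open>\<lambda>\<^bsub>k+1\<^esub>\<close>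
  (\<open>xs ! k\<close> for the list \<open>xs\<close>). Those with
  \<open>\<lambda>\<^bsub>k+1\<^esub> = 0\<close> have at most \<open>k\<close> parts, with generating function \<open>1/(t;t)\<^bsub>k\<^esub>\<close>. Those with
  \<open>\<lambda>\<^bsub>k+1\<^esub> = m > 0\<close> have generating function \<open>t\<^bsup>(k+1)m\<^esup>/((t;t)\<^bsub>k\<^esub> (t;t)\<^bsub>m\<^esub>)\<close>, by
  induction on \<open>k\<close>: if \<open>\<lambda>\<^bsub>k\<^esub> > \<lambda>\<^bsub>k+1\<^esub>\<close>, subtract one from each of the first \<open>k+1\<close> parts; if
  \<open>\<lambda>\<^bsub>k\<^esub> = \<lambda>\<^bsub>k+1\<^esub>\<close>, delete the part \<open>\<lambda>\<^bsub>k\<^esub>\<close>. Hence \<open>(t;t)\<^bsub>k+l\<^esub> G\<^bsub>k,l\<^esub>\<close> satisfies the recurrence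
  \<open>A\<^bsup>k,l+1\<^esup> = (1 - t\<^bsup>k+l+1\<^esup>) A\<^bsup>k,l\<^esup> + t\<^bsup>(l+1)(k+1)\<^esup> [k+l+1, l+1]\<^bsub>t\<^esub>\<close>. The explicit
  \<open>A\<^bsup>k,l\<^esup>\<close> satisfies it too: by the \<open>t\<close>-Vandermonde identity the last term splits as
  \<open>\<Sum>\<^bsub>i\<^esub> t\<^bsup>(l+1)(k+1)+i\<^sup>2\<^esup> [k,i]\<^bsub>t\<^esub> [l+1,i]\<^bsub>t\<^esub>\<close>, and the recurrence then holds summand by
  summand up to a telescoping term.\<close>

section \<open>The \<open>t\<close>-binomial coefficients\<close>

lemma tpoch_0 [simp]: "tpoch 0 = 1"
  by (simp add: tpoch_def)

lemma tpoch_Suc: "tpoch (Suc n) = tpoch n * (1 - fps_X ^ Suc n)"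
  by (simp add: tpoch_def)

lemma fps_nth_tpoch_0 [simp]: "fps_nth (tpoch n) 0 = 1"
  by (induction n) (simp_all add: tpoch_Suc)

lemma tpoch_nonzero [simp]: "tpoch n \<noteq> 0"
  using fps_nth_tpoch_0[of n] by (metis fps_zero_nth zero_neq_one)

lemma tpoch_diff_Suc: "m < n \<Longrightarrow> tpoch (n - m) = tpoch (n - Suc m) * (1 - fps_X ^ (n - m))"
  by (metis Suc_diff_Suc tpoch_Suc)

lemma mult_tpoch_eq_of_recurrence:
  assumes rec: "\<And>k. f (Suc k) = fps_X ^ Suc k * f (Suc k) + c * f k"
  shows "f k * tpoch k = c ^ k * f 0"
proof (induction k)
  case (Suc k)
  have "f (Suc k) * (1 - fps_X ^ Suc k) = c * f k"
    using rec[of k] by (simp add: algebra_simps)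
  then have "f (Suc k) * tpoch (Suc k) = c * (f k * tpoch k)"
    by (simp add: tpoch_Suc mult.assoc mult.left_commute[of "tpoch k"])
  then show ?case
    using Suc.IH by simp
qed simp

lemma prod_inverse_one_minus_X_power:
  "(\<Prod>i = 1..n. inverse (1 - fps_X ^ i)) = inverse (tpoch n)"
proof (induction n)
  case (Suc n)
  then show ?case
    by (simp add: atLeastAtMostSuc_conv tpoch_Suc fps_inverse_mult mult.commute)
qed simp

lemma tbinom_mult_tpoch: "r \<le> n \<Longrightarrow> tbinom n r * (tpoch r * tpoch (n - r)) = tpoch n"
  by (simp add: tbinom_def fps_is_unit_iff unit_div_mult_self)

lemma tbinom_eqI:
  assumes "r \<le> n" "f * (tpoch r * tpoch (n - r)) = tpoch n"
  shows "tbinom n r = f"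
proof -
  have "tbinom n r * (tpoch r * tpoch (n - r)) = f * (tpoch r * tpoch (n - r))"
    using tbinom_mult_tpoch[OF assms(1)] assms(2) by simp
  then show ?thesis by simp
qed

lemma tbinom_eq_0: "n < r \<Longrightarrow> tbinom n r = 0"
  by (simp add: tbinom_def)

lemma tbinom_0_right [simp]: "tbinom n 0 = 1"
  by (rule tbinom_eqI) simp_all

lemma tbinom_self [simp]: "tbinom n n = 1"
  by (rule tbinom_eqI) simp_all

lemma tbinom_symmetric: "r \<le> n \<Longrightarrow> tbinom n (n - r) = tbinom n r"
  by (rule tbinom_eqI) (simp_all add: tbinom_mult_tpoch mult.commute)

lemma tbinom_Suc_Suc:
  "tbinom (Suc n) (Suc r) = tbinom n r + fps_X ^ Suc r * tbinom n (Suc r)"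
proof (cases "r < n")
  case True
  have "(tbinom n r + fps_X ^ Suc r * tbinom n (Suc r)) * (tpoch (Suc r) * tpoch (n - r))
      = (1 - fps_X ^ Suc r) * (tbinom n r * (tpoch r * tpoch (n - r)))
        + fps_X ^ Suc r * (1 - fps_X ^ (n - r)) * (tbinom n (Suc r) * (tpoch (Suc r) * tpoch (n - Suc r)))"
    using True by (simp add: tpoch_Suc tpoch_diff_Suc algebra_simps)
  also have "\<dots> = tpoch n * (1 - fps_X ^ Suc r * fps_X ^ (n - r))"
    using True tbinom_mult_tpoch[of r n] tbinom_mult_tpoch[of "Suc r" n] by (simp add: algebra_simps)
  also have "\<dots> = tpoch (Suc n)"
    using True by (simp add: tpoch_Suc flip: power_add)
  finally show ?thesis
    using True by (intro tbinom_eqI) simp_all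
next
  case False
  then show ?thesis by (cases "r = n") (simp_all add: tbinom_eq_0)
qed

lemma tbinom_Suc_Suc':
  "tbinom (Suc n) (Suc r) = fps_X ^ (n - r) * tbinom n r + tbinom n (Suc r)"
proof (cases "r < n")
  case True
  have "(fps_X ^ (n - r) * tbinom n r + tbinom n (Suc r)) * (tpoch (Suc r) * tpoch (n - r))
      = fps_X ^ (n - r) * (1 - fps_X ^ Suc r) * (tbinom n r * (tpoch r * tpoch (n - r)))
        + (1 - fps_X ^ (n - r)) * (tbinom n (Suc r) * (tpoch (Suc r) * tpoch (n - Suc r)))"
    using True by (simp add: tpoch_Suc tpoch_diff_Suc algebra_simps)
  also have "\<dots> = tpoch n * (1 - fps_X ^ (n - r) * fps_X ^ Suc r)"
    using True tbinom_mult_tpoch[of r n] tbinom_mult_tpoch[of "Suc r" n] by (simp add: algebra_simps)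
  also have "\<dots> = tpoch (Suc n)"
    using True by (simp add: tpoch_Suc flip: power_add)
  finally show ?thesis
    using True by (intro tbinom_eqI) simp_all
next
  case False
  then show ?thesis by (cases "r = n") (simp_all add: tbinom_eq_0)
qed

lemma one_minus_X_power_mult_tbinom_Suc:
  "(1 - fps_X ^ Suc r) * tbinom n (Suc r) = (1 - fps_X ^ (n - r)) * tbinom n r"
  using tbinom_Suc_Suc[of n r] tbinom_Suc_Suc'[of n r] by (simp add: algebra_simps)

lemma tbinom_Vandermonde:
  "tbinom (m + n) r = (\<Sum>j\<le>r. fps_X ^ (j * (n + j - r)) * tbinom m j * tbinom n (r - j))"
proof (induction m arbitrary: r)
  case 0
  then show ?case
    by (cases r) (simp_all add: tbinom_eq_0 sum.atMost_Suc_shift del: sum.atMost_Suc)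
next
  case (Suc m)
  show ?case
  proof (cases r)
    case (Suc s)
    have exponent: "fps_X ^ (Suc j * (n + j - s)) * fps_X ^ (m - j) * tbinom m j * tbinom n (s - j)
        = fps_X ^ (m + n - s) * (fps_X ^ (j * (n + j - s)) * tbinom m j * tbinom n (s - j))"
      if "j \<le> s" for j
    proof (cases "j \<le> m \<and> s - j \<le> n")
      case True
      with that have "n + j - s + (m - j) = m + n - s"
        by arith
      then have "Suc j * (n + j - s) + (m - j) = (m + n - s) + j * (n + j - s)"
        by (simp only: mult_Suc)
      then show ?thesis
        by (simp add: algebra_simps flip: power_add)
    qed (auto simp: tbinom_eq_0)
    have "(\<Sum>j\<le>Suc s. fps_X ^ (j * (n + j - Suc s)) * tbinom (Suc m) j * tbinom n (Suc s - j))
        = tbinom n (Suc s)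
          + (\<Sum>j\<le>s. fps_X ^ (Suc j * (n + j - s)) * fps_X ^ (m - j) * tbinom m j * tbinom n (s - j))
          + (\<Sum>j\<le>s. fps_X ^ (Suc j * (n + j - s)) * tbinom m (Suc j) * tbinom n (s - j))"
      by (simp add: sum.atMost_Suc_shift tbinom_Suc_Suc' algebra_simps sum.distrib
          del: sum.atMost_Suc)
    also have "\<dots> = fps_X ^ (m + n - s) * tbinom (m + n) s + tbinom (m + n) (Suc s)"
    proof -
      have "(\<Sum>j\<le>s. fps_X ^ (Suc j * (n + j - s)) * fps_X ^ (m - j) * tbinom m j * tbinom n (s - j))
          = fps_X ^ (m + n - s) * tbinom (m + n) s"
        unfolding Suc.IH[of s] sum_distrib_left by (rule sum.cong[OF refl], rule exponent) simp
      moreover have "tbinom n (Suc s)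
          + (\<Sum>j\<le>s. fps_X ^ (Suc j * (n + j - s)) * tbinom m (Suc j) * tbinom n (s - j))
          = tbinom (m + n) (Suc s)"
        using Suc.IH[of "Suc s"] by (simp add: sum.atMost_Suc_shift del: sum.atMost_Suc)
      ultimately show ?thesis
        by (simp add: add.assoc add.left_commute)
    qed
    also have "\<dots> = tbinom (Suc m + n) (Suc s)"
      by (simp add: tbinom_Suc_Suc')
    finally show ?thesis
      using Suc by simp
  qed simp
qed

lemma tbinom_Vandermonde_square:
  "tbinom (k + l) l = (\<Sum>i\<le>l. fps_X ^ (i * i) * tbinom k i * tbinom l i)"
  unfolding tbinom_Vandermonde[of k l l] by (rule sum.cong) (auto simp: tbinom_symmetric)

section \<open>The recurrence for \<open>A\<^bsup>k,l\<^esup>\<close>\<close>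

definition A_hook_inner :: "nat \<Rightarrow> nat \<Rightarrow> nat \<Rightarrow> rat fps" where
  "A_hook_inner k i m = (\<Sum>j<m. fps_X ^ (j * (k - i + 1)) * tbinom (i + j - 1) j)"

definition A_hook_summand :: "nat \<Rightarrow> nat \<Rightarrow> nat \<Rightarrow> rat fps" where
  "A_hook_summand k l i = fps_X ^ (i * (k + l + 1)) * tbinom k i * A_hook_inner k i (l + 1 - i)"

lemma A_hook_summand_0 [simp]: "A_hook_summand k l 0 = 1"
  by (simp add: A_hook_summand_def A_hook_inner_def sum.lessThan_Suc_shift tbinom_eq_0
      del: sum.lessThan_Suc)

lemma A_hook_summand_eq_0: "l < i \<or> k < i \<Longrightarrow> A_hook_summand k l i = 0"
  by (auto simp: A_hook_summand_def A_hook_inner_def tbinom_eq_0)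

lemma A_hook_eq_sum_summands: "A_hook k l = (\<Sum>i\<le>l. A_hook_summand k l i)"
proof -
  have "A_hook_summand k l i = fps_X ^ (i * (k + l + 1)) * tbinom k i *
      (\<Sum>j = 0..l - i. fps_X ^ (j * (k - i + 1)) * tbinom (i + j - 1) j)" if "i \<in> {1..l}" for i
  proof -
    from that have "l + 1 - i = Suc (l - i)" by auto
    then show ?thesis
      by (simp add: A_hook_summand_def A_hook_inner_def atLeast0AtMost lessThan_Suc_atMost)
  qed
  then show ?thesis
    by (simp add: A_hook_def atMost_atLeast0 sum.atLeast_Suc_atMost)
qed

lemma A_hook_inner_Suc_split:
  "A_hook_inner (i + c) i (Suc n)
     = (1 - fps_X ^ c) * A_hook_inner (i + c) (Suc i) n + fps_X ^ (n * c) * tbinom (n + i) n"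
proof (induction n)
  case (Suc n)
  have weight: "(1 - fps_X ^ c) * fps_X ^ (n * (i + c - Suc i + 1)) = (1 - fps_X ^ c) * (fps_X ^ (n * c) :: rat fps)"
    by (cases c) simp_all
  have inner: "(1 - fps_X ^ c) * A_hook_inner (i + c) (Suc i) (Suc n)
      = (1 - fps_X ^ c) * A_hook_inner (i + c) (Suc i) n + (1 - fps_X ^ c) * fps_X ^ (n * c) * tbinom (n + i) n"
    unfolding A_hook_inner_def sum.lessThan_Suc distrib_left
    using weight by (simp add: add.commute mult.assoc[symmetric])
  have "A_hook_inner (i + c) i (Suc (Suc n))
      = (1 - fps_X ^ c) * A_hook_inner (i + c) (Suc i) n + fps_X ^ (n * c) * tbinom (n + i) n
        + fps_X ^ (n * c) * fps_X ^ c * fps_X ^ Suc n * tbinom (n + i) (Suc n)"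
    using Suc.IH by (simp add: A_hook_inner_def add.commute power_add[symmetric] algebra_simps)
  also have "\<dots> = (1 - fps_X ^ c) * (A_hook_inner (i + c) (Suc i) n + fps_X ^ (n * c) * tbinom (n + i) n)
      + fps_X ^ (n * c) * fps_X ^ c * (tbinom (n + i) n + fps_X ^ Suc n * tbinom (n + i) (Suc n))"
    by (simp add: algebra_simps)
  also have "\<dots> = (1 - fps_X ^ c) * A_hook_inner (i + c) (Suc i) (Suc n)
      + fps_X ^ (Suc n * c) * tbinom (Suc n + i) (Suc n)"
    unfolding inner by (simp add: tbinom_Suc_Suc power_add algebra_simps)
  finally show ?case .
qed (simp add: A_hook_inner_def)

lemma A_hook_summand_Suc_add:
  fixes i c n :: nat
  defines "k \<equiv> i + c" and "L \<equiv> i + n"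
  shows "A_hook_summand k (Suc L) i
     = (fps_X ^ i - fps_X ^ (k + Suc L)) * A_hook_summand k L i
       + (1 - fps_X ^ Suc i) * A_hook_summand k L (Suc i)
       + fps_X ^ (Suc L * (k + 1) + i * i) * tbinom k i * tbinom (Suc L) i"
proof -
  define P :: "rat fps" where "P = fps_X ^ (i * (k + L + 1))"
  define Y :: "rat fps" where "Y = fps_X ^ (k + Suc L)"
  define Z :: "rat fps" where "Z = fps_X ^ (Suc n * Suc c)"
  define W :: "rat fps" where "W = fps_X ^ (n * c)"
  define E :: "rat fps" where "E = fps_X ^ (Suc L * (k + 1) + i * i)"
  define Sa where "Sa = A_hook_inner k i (Suc n)"
  define Sb where "Sb = A_hook_inner k (Suc i) n"
  define B0 where "B0 = tbinom (n + i) n"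
  define B1 where "B1 = tbinom (n + i) (Suc n)"
  have summand_Suc_L: "A_hook_summand k (Suc L) i = fps_X ^ i * P * tbinom k i * (Sa + Z * B1)"
  proof -
    have "Suc L + 1 - i = Suc (Suc n)" "i * (k + Suc L + 1) = i + i * (k + L + 1)"
      by (simp_all add: L_def)
    then show ?thesis
      by (simp add: A_hook_summand_def A_hook_inner_def Sa_def B1_def P_def Z_def k_def L_def
          power_add add.commute)
  qed
  have summand_L: "A_hook_summand k L i = P * tbinom k i * Sa"
    by (simp add: A_hook_summand_def P_def Sa_def L_def)
  have summand_L_Suc_i: "(1 - fps_X ^ Suc i) * A_hook_summand k L (Suc i) = Y * P * ((1 - fps_X ^ c) * Sb) * tbinom k i"
  proof -
    have "Suc i * (k + L + 1) = (k + Suc L) + i * (k + L + 1)" "L + 1 - Suc i = n"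
      by (simp_all add: L_def)
    then have "A_hook_summand k L (Suc i) = Y * P * tbinom k (Suc i) * Sb"
      by (simp add: A_hook_summand_def Sb_def P_def Y_def power_add)
    moreover have "(1 - fps_X ^ Suc i) * tbinom k (Suc i) = (1 - fps_X ^ c) * tbinom k i"
      using one_minus_X_power_mult_tbinom_Suc[of i k] by (simp add: k_def)
    ultimately show ?thesis
      by (simp only: ac_simps)
  qed
  have split: "(1 - fps_X ^ c) * Sb = Sa - W * B0"
    using A_hook_inner_Suc_split[of i c n] by (simp add: Sa_def Sb_def W_def B0_def k_def)
  have pascal: "tbinom (Suc L) i = fps_X ^ i * B0 + B1"
    using tbinom_symmetric[of "Suc n" "Suc L"] tbinom_Suc_Suc'[of "i + n" n]
    by (simp add: L_def B0_def B1_def add.commute)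
  have E: "E = fps_X ^ i * P * Z"
    by (simp add: E_def P_def Z_def k_def L_def algebra_simps flip: power_add)
  have YPW: "Y * P * W = E * fps_X ^ i"
    by (simp add: E_def Y_def P_def W_def k_def L_def algebra_simps flip: power_add)
  have "(fps_X ^ i - Y) * A_hook_summand k L i + (1 - fps_X ^ Suc i) * A_hook_summand k L (Suc i)
        + E * tbinom k i * tbinom (Suc L) i
      = fps_X ^ i * P * tbinom k i * Sa - (Y * P * W) * (tbinom k i * B0)
        + (E * fps_X ^ i) * (tbinom k i * B0) + E * tbinom k i * B1"
    unfolding summand_L summand_L_Suc_i split pascal by (simp add: algebra_simps)
  also have "\<dots> = A_hook_summand k (Suc L) i"
    unfolding YPW summand_Suc_L E by (simp add: algebra_simps)
  finally show ?thesis
    by (simp add: Y_def E_def)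
qed

lemma A_hook_summand_Suc:
  "A_hook_summand k (Suc L) i
     = (fps_X ^ i - fps_X ^ (k + Suc L)) * A_hook_summand k L i
       + (1 - fps_X ^ Suc i) * A_hook_summand k L (Suc i)
       + fps_X ^ (Suc L * (k + 1) + i * i) * tbinom k i * tbinom (Suc L) i"
proof -
  consider "k < i \<or> Suc L < i" | "i = Suc L" "i \<le> k" | "i \<le> k" "i \<le> L"
    by linarith
  then show ?thesis
  proof cases
    case 1
    then show ?thesis
      by (auto simp: A_hook_summand_eq_0 tbinom_eq_0)
  next
    case 2
    then show ?thesis
      by (simp add: A_hook_summand_def A_hook_inner_def A_hook_summand_eq_0 algebra_simps)
  next
    case 3
    then obtain c n where "k = i + c" "L = i + n"
      using le_Suc_ex by metis
    then show ?thesis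
      using A_hook_summand_Suc_add by simp
  qed
qed

lemma A_hook_0 [simp]: "A_hook k 0 = 1"
  by (simp add: A_hook_def)

lemma A_hook_Suc:
  "A_hook k (Suc L)
     = (1 - fps_X ^ (k + Suc L)) * A_hook k L + fps_X ^ (Suc L * (k + 1)) * tbinom (k + Suc L) (Suc L)"
proof -
  have "(\<Sum>i\<le>Suc L. (1 - fps_X ^ Suc i) * A_hook_summand k L (Suc i))
      = (\<Sum>i\<le>L. (1 - fps_X ^ i) * A_hook_summand k L i)"
    using sum.atMost_Suc_shift[of "\<lambda>i. (1 - fps_X ^ i) * A_hook_summand k L i" "Suc L"]
    by (simp add: A_hook_summand_eq_0)
  moreover have "(\<Sum>i\<le>Suc L. fps_X ^ (Suc L * (k + 1) + i * i) * tbinom k i * tbinom (Suc L) i)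
      = fps_X ^ (Suc L * (k + 1)) * tbinom (k + Suc L) (Suc L)"
    unfolding tbinom_Vandermonde_square[of k "Suc L"] sum_distrib_left power_add
    by (simp only: mult.assoc)
  ultimately have "A_hook k (Suc L)
      = (\<Sum>i\<le>L. (fps_X ^ i - fps_X ^ (k + Suc L)) * A_hook_summand k L i
                 + (1 - fps_X ^ i) * A_hook_summand k L i)
        + fps_X ^ (Suc L * (k + 1)) * tbinom (k + Suc L) (Suc L)"
    by (simp add: A_hook_eq_sum_summands A_hook_summand_Suc sum.distrib A_hook_summand_eq_0)
  also have "\<dots> = (1 - fps_X ^ (k + Suc L)) * A_hook k L + fps_X ^ (Suc L * (k + 1)) * tbinom (k + Suc L) (Suc L)"
    unfolding A_hook_eq_sum_summands[of k L] sum_distrib_left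
    by (intro arg_cong2[where f = "(+)"] sum.cong) (simp_all add: algebra_simps)
  finally show ?thesis .
qed

section \<open>Generating functions of classes of partitions\<close>

definition partitions_with :: "nat \<Rightarrow> (nat list \<Rightarrow> bool) \<Rightarrow> nat list set" where
  "partitions_with n P = {xs. is_partition n xs \<and> P xs}"

definition partition_gf :: "(nat list \<Rightarrow> bool) \<Rightarrow> rat fps" where
  "partition_gf P = Abs_fps (\<lambda>n. of_nat (card (partitions_with n P)))"

lemma is_partition_Nil [simp]: "is_partition n [] \<longleftrightarrow> n = 0"
  by (auto simp: is_partition_def)

lemma is_partition_Cons:
  "is_partition n (x # xs) \<longleftrightarrow> 0 < x \<and> x \<le> n \<and> (\<forall>y\<in>set xs. y \<le> x) \<and> is_partition (n - x) xs"
  by (auto simp: is_partition_def)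

lemma is_partition_snoc_1:
  "is_partition n (xs @ [1]) \<longleftrightarrow> 1 \<le> n \<and> is_partition (n - 1) xs"
  by (auto simp: is_partition_def sorted_wrt_append Suc_le_eq intro: Nat.gr0I)

lemma is_partition_pos: "is_partition n xs \<Longrightarrow> x \<in> set xs \<Longrightarrow> 0 < x"
  unfolding is_partition_def by (auto intro: Nat.gr0I)

lemma is_partition_member_le: "is_partition n xs \<Longrightarrow> x \<in> set xs \<Longrightarrow> x \<le> n"
  unfolding is_partition_def using member_le_sum_list by blast

lemma is_partition_length_le:
  assumes "is_partition n xs"
  shows "length xs \<le> n"
proof -
  have "length ys \<le> sum_list ys" if "0 \<notin> set ys" for ys :: "nat list"
    using that by (induction ys) auto
  then show ?thesis
    using assms unfolding is_partition_def by blast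
qed

lemma is_partition_nth_antimono:
  "is_partition n xs \<Longrightarrow> i \<le> j \<Longrightarrow> j < length xs \<Longrightarrow> xs ! j \<le> xs ! i"
  unfolding is_partition_def by (cases "i = j") (auto simp: sorted_wrt_iff_nth_less)

lemma finite_partitions_with: "finite (partitions_with n P)"
proof (rule finite_subset)
  show "partitions_with n P \<subseteq> {xs. set xs \<subseteq> {..n} \<and> length xs \<le> n}"
    unfolding partitions_with_def using is_partition_length_le is_partition_member_le by fastforce
  show "finite {xs. set xs \<subseteq> {..n} \<and> length xs \<le> n}"
    by (rule finite_lists_length_le) simp
qed

lemma partition_gf_cong:
  assumes "\<And>n xs. is_partition n xs \<Longrightarrow> P xs \<longleftrightarrow> Q xs"
  shows "partition_gf P = partition_gf Q"
proof -
  have "partitions_with n P = partitions_with n Q" for n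
    using assms by (auto simp: partitions_with_def)
  then show ?thesis
    by (simp add: partition_gf_def)
qed

lemma partition_gf_split:
  "partition_gf P = partition_gf (\<lambda>xs. P xs \<and> Q xs) + partition_gf (\<lambda>xs. P xs \<and> \<not> Q xs)"
proof (rule fps_ext)
  fix n
  have "partitions_with n P
      = partitions_with n (\<lambda>xs. P xs \<and> Q xs) \<union> partitions_with n (\<lambda>xs. P xs \<and> \<not> Q xs)"
    "partitions_with n (\<lambda>xs. P xs \<and> Q xs) \<inter> partitions_with n (\<lambda>xs. P xs \<and> \<not> Q xs) = {}"
    by (auto simp: partitions_with_def)
  then show "fps_nth (partition_gf P) n
      = fps_nth (partition_gf (\<lambda>xs. P xs \<and> Q xs) + partition_gf (\<lambda>xs. P xs \<and> \<not> Q xs)) n"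
    by (simp add: partition_gf_def card_Un_disjoint finite_partitions_with)
qed

lemma partition_gf_shift:
  assumes f: "\<And>n xs. is_partition n xs \<Longrightarrow> P xs \<Longrightarrow>
                a \<le> n \<and> is_partition (n - a) (f xs) \<and> Q (f xs) \<and> g (f xs) = xs"
      and g: "\<And>n ys. is_partition n ys \<Longrightarrow> Q ys \<Longrightarrow>
                is_partition (n + a) (g ys) \<and> P (g ys) \<and> f (g ys) = ys"
  shows "partition_gf P = fps_X ^ a * partition_gf Q"
proof (rule fps_ext)
  fix n
  show "fps_nth (partition_gf P) n = fps_nth (fps_X ^ a * partition_gf Q) n"
  proof (cases "a \<le> n")
    case True
    have "bij_betw f (partitions_with n P) (partitions_with (n - a) Q)"
    proof (rule bij_betw_byWitness[where f' = g])
      show "\<forall>xs\<in>partitions_with n P. g (f xs) = xs"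
        using f by (auto simp: partitions_with_def)
      show "\<forall>ys\<in>partitions_with (n - a) Q. f (g ys) = ys"
        using g by (auto simp: partitions_with_def)
      show "f ` partitions_with n P \<subseteq> partitions_with (n - a) Q"
        using f by (auto simp: partitions_with_def)
      show "g ` partitions_with (n - a) Q \<subseteq> partitions_with n P"
        using g[of "n - a"] True by (auto simp: partitions_with_def)
    qed
    then show ?thesis
      using True by (simp add: partition_gf_def fps_X_power_mult_nth bij_betw_same_card)
  next
    case False
    then have "partitions_with n P = {}"
      using f by (auto simp: partitions_with_def)
    then show ?thesis
      using False by (simp add: partition_gf_def fps_X_power_mult_nth)
  qed
qed

lemma is_partition_nth_le_take:
  "is_partition n xs \<Longrightarrow> k < length xs \<Longrightarrow> x \<in> set (take (Suc k) xs) \<Longrightarrow> xs ! k \<le> x"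
  by (auto simp: in_set_conv_nth less_Suc_eq_le intro: is_partition_nth_antimono)

lemma is_partition_drop_le_nth:
  "is_partition n xs \<Longrightarrow> k < length xs \<Longrightarrow> y \<in> set (drop k xs) \<Longrightarrow> y \<le> xs ! k"
  by (auto simp: in_set_conv_nth intro: is_partition_nth_antimono)

lemma partition_gf_hd_eq:
  assumes "0 < l"
  shows "partition_gf (\<lambda>xs. xs \<noteq> [] \<and> hd xs = l) = fps_X ^ l * partition_gf (\<lambda>xs. \<forall>x\<in>set xs. x \<le> l)"
proof (rule partition_gf_shift[where f = tl and g = "Cons l"])
  fix n xs
  assume "is_partition n xs" "xs \<noteq> [] \<and> hd xs = l"
  then show "l \<le> n \<and> is_partition (n - l) (tl xs) \<and> (\<forall>x\<in>set (tl xs). x \<le> l) \<and> l # tl xs = xs"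
    by (cases xs) (auto simp: is_partition_Cons)
qed (use assms in \<open>auto simp: is_partition_Cons\<close>)

lemma partition_gf_last_eq_1:
  "partition_gf (\<lambda>xs. length xs = Suc k \<and> last xs = 1) = fps_X * partition_gf (\<lambda>xs. length xs = k)"
proof -
  have "partition_gf (\<lambda>xs. length xs = Suc k \<and> last xs = 1) = fps_X ^ 1 * partition_gf (\<lambda>xs. length xs = k)"
  proof (rule partition_gf_shift[where f = butlast and g = "\<lambda>ys. ys @ [1]"])
    fix n xs
    assume "is_partition n xs" "length xs = Suc k \<and> last xs = 1"
    moreover from this have "xs = butlast xs @ [1]"
      by (metis append_butlast_last_id list.size(3) nat.distinct(1))
    ultimately show "1 \<le> n \<and> is_partition (n - 1) (butlast xs) \<and> length (butlast xs) = k
        \<and> butlast xs @ [1] = xs"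
      by (metis is_partition_snoc_1 length_butlast diff_Suc_1)
  qed (use is_partition_snoc_1 in auto)
  then show ?thesis
    by simp
qed

definition incr_prefix :: "nat \<Rightarrow> nat list \<Rightarrow> nat list" where
  "incr_prefix K xs = map Suc (take K xs) @ drop K xs"

definition decr_prefix :: "nat \<Rightarrow> nat list \<Rightarrow> nat list" where
  "decr_prefix K xs = map (\<lambda>x. x - 1) (take K xs) @ drop K xs"

lemma is_partition_incr_prefix:
  assumes "is_partition n ys" "K \<le> length ys"
  shows "is_partition (n + K) (incr_prefix K ys)"
proof -
  have "sorted_wrt (\<ge>) (take K ys)" "sorted_wrt (\<ge>) (drop K ys)"
    "\<forall>x\<in>set (take K ys). \<forall>y\<in>set (drop K ys). y \<le> x"
    using assms(1) sorted_wrt_append[of "(\<ge>)" "take K ys" "drop K ys"]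
    by (simp_all add: is_partition_def)
  then have "sorted_wrt (\<ge>) (map Suc (take K ys) @ drop K ys)"
    by (auto simp: sorted_wrt_append sorted_wrt_map intro: le_SucI)
  moreover have "sum_list (map Suc (take K ys)) + sum_list (drop K ys) = n + K"
    using assms sum_list_Suc[of id "take K ys"]
    by (simp add: is_partition_def flip: sum_list_append)
  ultimately show ?thesis
    using assms(1) by (auto simp: is_partition_def incr_prefix_def dest: in_set_dropD)
qed

lemma incr_decr_prefix:
  "K \<le> length xs \<Longrightarrow> \<forall>x\<in>set (take K xs). 0 < x \<Longrightarrow> incr_prefix K (decr_prefix K xs) = xs"
  by (simp add: incr_prefix_def decr_prefix_def map_idI)

lemma decr_incr_prefix: "K \<le> length ys \<Longrightarrow> decr_prefix K (incr_prefix K ys) = ys"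
  by (simp add: incr_prefix_def decr_prefix_def map_idI)

lemma is_partition_decr_prefix:
  assumes p: "is_partition n xs" and k: "Suc k \<le> length xs" and two: "2 \<le> xs ! k"
      and gap: "Suc k < length xs \<longrightarrow> xs ! Suc k < xs ! k"
  shows "is_partition (n - Suc k) (decr_prefix (Suc k) xs)"
proof -
  have head_ge_2: "2 \<le> x" if "x \<in> set (take (Suc k) xs)" for x
    using is_partition_nth_le_take[OF p _ that] k two by simp
  have head_gt_tail: "y < x" if "x \<in> set (take (Suc k) xs)" "y \<in> set (drop (Suc k) xs)" for x y
  proof -
    from that(2) have "Suc k < length xs"
      by (auto dest: in_set_dropD simp: in_set_conv_nth)
    then show ?thesis
      using is_partition_drop_le_nth[OF p _ that(2)] is_partition_nth_le_take[OF p _ that(1)] gap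
      by fastforce
  qed
  define ys where "ys = decr_prefix (Suc k) xs"
  have sorted_take: "sorted_wrt (\<ge>) (take (Suc k) xs)"
    and sorted_drop: "sorted_wrt (\<ge>) (drop (Suc k) xs)"
    using p sorted_wrt_append[of "(\<ge>)" "take (Suc k) xs" "drop (Suc k) xs"]
    by (simp_all add: is_partition_def)
  have "sorted_wrt (\<ge>) (map (\<lambda>x. x - 1) (take (Suc k) xs))"
    using sorted_take by (simp add: sorted_wrt_map) (rule sorted_wrt_mono_rel, auto)
  then have "sorted_wrt (\<ge>) ys"
    using sorted_drop head_gt_tail by (fastforce simp: ys_def decr_prefix_def sorted_wrt_append)
  moreover have "0 \<notin> set ys"
    using p head_ge_2 by (force simp: ys_def decr_prefix_def is_partition_def dest: in_set_dropD)
  ultimately have ys: "is_partition (sum_list ys) ys"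
    by (simp add: is_partition_def)
  have "incr_prefix (Suc k) ys = xs"
    unfolding ys_def using k head_ge_2 by (force intro: incr_decr_prefix)
  moreover have "is_partition (sum_list ys + Suc k) (incr_prefix (Suc k) ys)"
    using is_partition_incr_prefix[OF ys, of "Suc k"] k by (simp add: ys_def decr_prefix_def)
  ultimately have "is_partition (sum_list ys + Suc k) xs"
    by simp
  with p have "n = sum_list ys + Suc k"
    by (simp add: is_partition_def)
  with ys show ?thesis
    by (simp add: ys_def)
qed

lemma nth_incr_prefix:
  "i < length ys \<Longrightarrow> incr_prefix K ys ! i = (if i < K then Suc (ys ! i) else ys ! i)"
  by (auto simp: incr_prefix_def nth_append min_def)

lemma partition_gf_decr_prefix:
  "partition_gf (\<lambda>xs. Suc k \<le> length xs \<and> R (drop (Suc k) xs) \<and> 2 \<le> xs ! k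
                      \<and> (Suc k < length xs \<longrightarrow> xs ! Suc k < xs ! k))
   = fps_X ^ Suc k * partition_gf (\<lambda>ys. Suc k \<le> length ys \<and> R (drop (Suc k) ys))"
proof (rule partition_gf_shift[where f = "decr_prefix (Suc k)" and g = "incr_prefix (Suc k)"])
  fix n xs
  assume p: "is_partition n xs" and xs: "Suc k \<le> length xs \<and> R (drop (Suc k) xs) \<and> 2 \<le> xs ! k
      \<and> (Suc k < length xs \<longrightarrow> xs ! Suc k < xs ! k)"
  have "incr_prefix (Suc k) (decr_prefix (Suc k) xs) = xs"
    using xs is_partition_pos[OF p] by (intro incr_decr_prefix) (auto dest: in_set_takeD)
  then show "Suc k \<le> n \<and> is_partition (n - Suc k) (decr_prefix (Suc k) xs)
      \<and> (Suc k \<le> length (decr_prefix (Suc k) xs) \<and> R (drop (Suc k) (decr_prefix (Suc k) xs)))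
      \<and> incr_prefix (Suc k) (decr_prefix (Suc k) xs) = xs"
    using xs is_partition_length_le[OF p] is_partition_decr_prefix[OF p]
    by (simp add: decr_prefix_def le_diff_conv2)
next
  fix n ys
  assume p: "is_partition n ys" and ys: "Suc k \<le> length ys \<and> R (drop (Suc k) ys)"
  then have k: "Suc k \<le> length ys"
    by simp
  have "length (incr_prefix (Suc k) ys) = length ys"
    "drop (Suc k) (incr_prefix (Suc k) ys) = drop (Suc k) ys"
    using k by (simp_all add: incr_prefix_def)
  moreover have "incr_prefix (Suc k) ys ! k = Suc (ys ! k)"
    using k by (simp add: nth_incr_prefix)
  moreover have "incr_prefix (Suc k) ys ! Suc k = ys ! Suc k" "ys ! Suc k \<le> ys ! k"
    if "Suc k < length ys"
    using that is_partition_nth_antimono[OF p _ that] by (simp_all add: nth_incr_prefix)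
  moreover have "0 < ys ! k"
    using k is_partition_pos[OF p] by simp
  ultimately show "is_partition (n + Suc k) (incr_prefix (Suc k) ys)
      \<and> (Suc k \<le> length (incr_prefix (Suc k) ys) \<and> R (drop (Suc k) (incr_prefix (Suc k) ys))
         \<and> 2 \<le> incr_prefix (Suc k) ys ! k
         \<and> (Suc k < length (incr_prefix (Suc k) ys)
            \<longrightarrow> incr_prefix (Suc k) ys ! Suc k < incr_prefix (Suc k) ys ! k))
      \<and> decr_prefix (Suc k) (incr_prefix (Suc k) ys) = ys"
    using ys is_partition_incr_prefix[OF p k] decr_incr_prefix[OF k] by (simp add: le_imp_less_Suc)
qed

lemma is_partition_remove_nth:
  assumes p: "is_partition n xs" and k: "k < length xs"
  shows "is_partition (n - xs ! k) (take k xs @ drop (Suc k) xs)"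
proof -
  have xs: "xs = take k xs @ xs ! k # drop (Suc k) xs"
    using k by (simp add: id_take_nth_drop)
  have "sorted_wrt (\<ge>) (take k xs @ xs ! k # drop (Suc k) xs)" "0 \<notin> set xs"
    "sum_list (take k xs @ xs ! k # drop (Suc k) xs) = n"
    using p xs by (simp_all add: is_partition_def)
  then show ?thesis
    by (auto simp: is_partition_def sorted_wrt_append dest: in_set_takeD in_set_dropD)
qed

lemma is_partition_duplicate_nth:
  assumes p: "is_partition n ys" and k: "k < length ys"
  shows "is_partition (n + ys ! k) (take k ys @ ys ! k # drop k ys)"
proof -
  have "sorted_wrt (\<ge>) (take k ys)" "sorted_wrt (\<ge>) (drop k ys)"
    "\<forall>x\<in>set (take k ys). \<forall>y\<in>set (drop k ys). y \<le> x"
    using p sorted_wrt_append[of "(\<ge>)" "take k ys" "drop k ys"] by (simp_all add: is_partition_def)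
  moreover have "0 \<notin> set (take k ys)" "0 \<notin> set (drop k ys)" "0 < ys ! k"
    using p k is_partition_pos[OF p] by (auto simp: is_partition_def dest: in_set_takeD in_set_dropD)
  moreover have "sum_list (take k ys) + sum_list (drop k ys) = n"
    using p by (simp add: is_partition_def flip: sum_list_append)
  moreover have "ys ! k \<in> set (drop k ys)"
    using k by (metis Cons_nth_drop_Suc list.set_intros(1))
  moreover have "\<forall>y\<in>set (drop k ys). y \<le> ys ! k"
    using is_partition_drop_le_nth[OF p k] by blast
  ultimately show ?thesis
    by (auto simp: is_partition_def sorted_wrt_append dest: in_set_takeD in_set_dropD)
qed

lemma partition_gf_remove_repeated_nth:
  "partition_gf (\<lambda>xs. Suc k < length xs \<and> xs ! Suc k = l \<and> xs ! k = l)
   = fps_X ^ l * partition_gf (\<lambda>ys. k < length ys \<and> ys ! k = l)"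
proof (rule partition_gf_shift[where f = "\<lambda>xs. take k xs @ drop (Suc k) xs"
                                  and g = "\<lambda>ys. take k ys @ l # drop k ys"])
  fix n xs
  assume p: "is_partition n xs" and xs: "Suc k < length xs \<and> xs ! Suc k = l \<and> xs ! k = l"
  then have "l \<le> n"
    using is_partition_member_le[OF p nth_mem, of k] by simp
  moreover have "take k xs @ l # drop k (take k xs @ drop (Suc k) xs) = xs"
    using xs id_take_nth_drop[of k xs] by simp
  ultimately show "l \<le> n \<and> is_partition (n - l) (take k xs @ drop (Suc k) xs)
      \<and> (k < length (take k xs @ drop (Suc k) xs) \<and> (take k xs @ drop (Suc k) xs) ! k = l)
      \<and> take k (take k xs @ drop (Suc k) xs) @ l # drop k (take k xs @ drop (Suc k) xs) = xs"
    using xs is_partition_remove_nth[OF p, of k] by (simp add: nth_append less_diff_conv)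
next
  fix n ys
  assume p: "is_partition n ys" and ys: "k < length ys \<and> ys ! k = l"
  then have k: "k < length ys" and "drop k ys = l # drop (Suc k) ys"
    by (auto simp: Cons_nth_drop_Suc)
  moreover have "take k ys @ l # drop (Suc k) ys = ys"
    using ys id_take_nth_drop[OF k] by simp
  ultimately show "is_partition (n + l) (take k ys @ l # drop k ys)
      \<and> (Suc k < length (take k ys @ l # drop k ys) \<and> (take k ys @ l # drop k ys) ! Suc k = l
         \<and> (take k ys @ l # drop k ys) ! k = l)
      \<and> take k (take k ys @ l # drop k ys) @ drop (Suc k) (take k ys @ l # drop k ys) = ys"
    using is_partition_duplicate_nth[OF p k] ys by (auto simp: nth_append)
qed

section \<open>Partitions in the hook\<close>

lemma partition_gf_Nil: "partition_gf (\<lambda>xs. xs = []) = 1"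
proof (rule fps_ext)
  fix n
  have "partitions_with n (\<lambda>xs. xs = []) = (if n = 0 then {[]} else {})"
    by (auto simp: partitions_with_def)
  then show "fps_nth (partition_gf (\<lambda>xs. xs = [])) n = fps_nth 1 n"
    by (simp add: partition_gf_def)
qed

lemma partition_gf_parts_le_Suc:
  "partition_gf (\<lambda>xs. \<forall>x\<in>set xs. x \<le> Suc l)
   = fps_X ^ Suc l * partition_gf (\<lambda>xs. \<forall>x\<in>set xs. x \<le> Suc l)
     + 1 * partition_gf (\<lambda>xs. \<forall>x\<in>set xs. x \<le> l)"
proof -
  have "partition_gf (\<lambda>xs. (\<forall>x\<in>set xs. x \<le> Suc l) \<and> (\<forall>x\<in>set xs. x \<le> l))
      = partition_gf (\<lambda>xs. \<forall>x\<in>set xs. x \<le> l)"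
    by (rule partition_gf_cong) auto
  moreover have "partition_gf (\<lambda>xs. (\<forall>x\<in>set xs. x \<le> Suc l) \<and> \<not> (\<forall>x\<in>set xs. x \<le> l))
      = partition_gf (\<lambda>xs. xs \<noteq> [] \<and> hd xs = Suc l)"
  proof (rule partition_gf_cong)
    fix n xs
    assume "is_partition n xs"
    then show "(\<forall>x\<in>set xs. x \<le> Suc l) \<and> \<not> (\<forall>x\<in>set xs. x \<le> l) \<longleftrightarrow> xs \<noteq> [] \<and> hd xs = Suc l"
      by (cases xs) (auto simp: is_partition_Cons)
  qed
  ultimately show ?thesis
    using partition_gf_split[of "\<lambda>xs. \<forall>x\<in>set xs. x \<le> Suc l" "\<lambda>xs. \<forall>x\<in>set xs. x \<le> l"]
    by (simp add: partition_gf_hd_eq add.commute)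
qed

lemma partition_gf_parts_le_mult_tpoch:
  "partition_gf (\<lambda>xs. \<forall>x\<in>set xs. x \<le> l) * tpoch l = 1"
proof -
  have "partition_gf (\<lambda>xs. \<forall>x\<in>set xs. x \<le> 0) = partition_gf (\<lambda>xs. xs = [])"
  proof (rule partition_gf_cong)
    fix n xs
    assume "is_partition n xs"
    then show "(\<forall>x\<in>set xs. x \<le> 0) \<longleftrightarrow> xs = []"
      by (cases xs) (auto simp: is_partition_Cons)
  qed
  then show ?thesis
    using mult_tpoch_eq_of_recurrence[OF partition_gf_parts_le_Suc, of l]
    by (simp add: partition_gf_Nil)
qed

lemma partition_gf_length_eq_Suc:
  "partition_gf (\<lambda>xs. length xs = Suc k)
   = fps_X ^ Suc k * partition_gf (\<lambda>xs. length xs = Suc k) + fps_X * partition_gf (\<lambda>xs. length xs = k)"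
proof -
  have "partition_gf (\<lambda>xs. length xs = Suc k \<and> 2 \<le> xs ! k)
      = partition_gf (\<lambda>xs. Suc k \<le> length xs \<and> drop (Suc k) xs = [] \<and> 2 \<le> xs ! k
                            \<and> (Suc k < length xs \<longrightarrow> xs ! Suc k < xs ! k))"
    by (rule partition_gf_cong) auto
  also have "\<dots> = fps_X ^ Suc k * partition_gf (\<lambda>ys. Suc k \<le> length ys \<and> drop (Suc k) ys = [])"
    by (rule partition_gf_decr_prefix)
  also have "partition_gf (\<lambda>ys. Suc k \<le> length ys \<and> drop (Suc k) ys = [])
      = partition_gf (\<lambda>xs. length xs = Suc k)"
    by (rule partition_gf_cong) auto
  finally have "partition_gf (\<lambda>xs. length xs = Suc k \<and> 2 \<le> xs ! k)
      = fps_X ^ Suc k * partition_gf (\<lambda>xs. length xs = Suc k)" .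
  moreover have "partition_gf (\<lambda>xs. length xs = Suc k \<and> \<not> 2 \<le> xs ! k)
      = partition_gf (\<lambda>xs. length xs = Suc k \<and> last xs = 1)"
  proof (rule partition_gf_cong)
    fix n xs
    assume "is_partition n xs"
    then have "length xs = Suc k \<Longrightarrow> 0 < xs ! k"
      using is_partition_pos nth_mem by simp
    moreover have "length xs = Suc k \<Longrightarrow> last xs = xs ! k"
      by (metis last_conv_nth list.size(3) nat.distinct(1) diff_Suc_1)
    ultimately show "length xs = Suc k \<and> \<not> 2 \<le> xs ! k \<longleftrightarrow> length xs = Suc k \<and> last xs = 1"
      by auto
  qed
  ultimately show ?thesis
    using partition_gf_split[of "\<lambda>xs. length xs = Suc k" "\<lambda>xs. 2 \<le> xs ! k"]
      partition_gf_last_eq_1[of k]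
    by simp
qed

lemma partition_gf_length_eq_mult_tpoch:
  "partition_gf (\<lambda>xs. length xs = k) * tpoch k = fps_X ^ k"
  using mult_tpoch_eq_of_recurrence[OF partition_gf_length_eq_Suc, of k]
  by (simp add: partition_gf_Nil)

lemma partition_gf_length_le_mult_tpoch:
  "partition_gf (\<lambda>xs. length xs \<le> k) * tpoch k = 1"
proof (induction k)
  case 0
  then show ?case
    by (simp add: partition_gf_Nil)
next
  case (Suc k)
  have "partition_gf (\<lambda>xs. length xs \<le> Suc k \<and> length xs \<le> k) = partition_gf (\<lambda>xs. length xs \<le> k)"
    "partition_gf (\<lambda>xs. length xs \<le> Suc k \<and> \<not> length xs \<le> k) = partition_gf (\<lambda>xs. length xs = Suc k)"
    by (rule partition_gf_cong, linarith)+
  then have "partition_gf (\<lambda>xs. length xs \<le> Suc k)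
      = partition_gf (\<lambda>xs. length xs \<le> k) + partition_gf (\<lambda>xs. length xs = Suc k)"
    using partition_gf_split[of "\<lambda>xs. length xs \<le> Suc k" "\<lambda>xs. length xs \<le> k"] by simp
  then have "partition_gf (\<lambda>xs. length xs \<le> Suc k) * tpoch (Suc k)
      = partition_gf (\<lambda>xs. length xs \<le> k) * tpoch k * (1 - fps_X ^ Suc k)
        + partition_gf (\<lambda>xs. length xs = Suc k) * tpoch (Suc k)"
    by (simp add: tpoch_Suc algebra_simps)
  then show ?case
    using Suc.IH partition_gf_length_eq_mult_tpoch[of "Suc k"] by simp
qed

lemma partition_gf_nth_eq_Suc:
  assumes "0 < l"
  shows "partition_gf (\<lambda>xs. Suc k < length xs \<and> xs ! Suc k = l)
    = fps_X ^ Suc k * partition_gf (\<lambda>xs. Suc k < length xs \<and> xs ! Suc k = l)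
      + fps_X ^ l * partition_gf (\<lambda>xs. k < length xs \<and> xs ! k = l)"
proof -
  have "partition_gf (\<lambda>xs. (Suc k < length xs \<and> xs ! Suc k = l) \<and> l < xs ! k)
      = partition_gf (\<lambda>xs. Suc k \<le> length xs \<and> (drop (Suc k) xs \<noteq> [] \<and> hd (drop (Suc k) xs) = l)
                            \<and> 2 \<le> xs ! k \<and> (Suc k < length xs \<longrightarrow> xs ! Suc k < xs ! k))"
    using assms by (intro partition_gf_cong) (auto simp: hd_drop_conv_nth)
  also have "\<dots> = fps_X ^ Suc k * partition_gf (\<lambda>ys. Suc k \<le> length ys
                                   \<and> (drop (Suc k) ys \<noteq> [] \<and> hd (drop (Suc k) ys) = l))"
    by (rule partition_gf_decr_prefix)
  also have "partition_gf (\<lambda>ys. Suc k \<le> length ys \<and> (drop (Suc k) ys \<noteq> [] \<and> hd (drop (Suc k) ys) = l))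
      = partition_gf (\<lambda>xs. Suc k < length xs \<and> xs ! Suc k = l)"
    by (rule partition_gf_cong) (auto simp: hd_drop_conv_nth)
  finally have "partition_gf (\<lambda>xs. (Suc k < length xs \<and> xs ! Suc k = l) \<and> l < xs ! k)
      = fps_X ^ Suc k * partition_gf (\<lambda>xs. Suc k < length xs \<and> xs ! Suc k = l)" .
  moreover have "partition_gf (\<lambda>xs. (Suc k < length xs \<and> xs ! Suc k = l) \<and> \<not> l < xs ! k)
      = partition_gf (\<lambda>xs. Suc k < length xs \<and> xs ! Suc k = l \<and> xs ! k = l)"
  proof (rule partition_gf_cong)
    fix n xs
    assume "is_partition n xs"
    then show "((Suc k < length xs \<and> xs ! Suc k = l) \<and> \<not> l < xs ! k)
        \<longleftrightarrow> Suc k < length xs \<and> xs ! Suc k = l \<and> xs ! k = l"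
      using is_partition_nth_antimono[of n xs k "Suc k"] by auto
  qed
  ultimately show ?thesis
    using partition_gf_split[of "\<lambda>xs. Suc k < length xs \<and> xs ! Suc k = l" "\<lambda>xs. l < xs ! k"]
      partition_gf_remove_repeated_nth[of k l]
    by simp
qed

lemma partition_gf_nth_eq_mult_tpoch:
  assumes "0 < l"
  shows "partition_gf (\<lambda>xs. k < length xs \<and> xs ! k = l) * (tpoch k * tpoch l) = fps_X ^ (Suc k * l)"
proof -
  have "partition_gf (\<lambda>xs. 0 < length xs \<and> xs ! 0 = l)
      = fps_X ^ l * partition_gf (\<lambda>xs. \<forall>x\<in>set xs. x \<le> l)"
    unfolding partition_gf_hd_eq[OF assms, symmetric]
    by (rule partition_gf_cong) (auto simp: hd_conv_nth)
  then have "partition_gf (\<lambda>xs. k < length xs \<and> xs ! k = l) * tpoch k * tpoch l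
      = fps_X ^ (l * k + l) * (partition_gf (\<lambda>xs. \<forall>x\<in>set xs. x \<le> l) * tpoch l)"
    using mult_tpoch_eq_of_recurrence[OF partition_gf_nth_eq_Suc[OF assms], of k]
    by (simp add: power_add power_mult mult.assoc)
  also have "\<dots> = fps_X ^ (Suc k * l)"
    by (simp add: partition_gf_parts_le_mult_tpoch add.commute)
  finally show ?thesis
    by (simp add: mult.assoc)
qed

lemma G_hook_eq_partition_gf:
  "G_hook k l = partition_gf (\<lambda>xs. \<forall>i. k \<le> i \<and> i < length xs \<longrightarrow> xs ! i \<le> l)"
  by (simp add: G_hook_def partition_gf_def partitions_with_def hook_partitions_def)

lemma G_hook_0: "G_hook k 0 = partition_gf (\<lambda>xs. length xs \<le> k)"
  unfolding G_hook_eq_partition_gf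
proof (rule partition_gf_cong)
  fix n xs
  assume "is_partition n xs"
  then have pos: "k < length xs \<Longrightarrow> 0 < xs ! k"
    using is_partition_pos nth_mem by blast
  show "(\<forall>i. k \<le> i \<and> i < length xs \<longrightarrow> xs ! i \<le> 0) \<longleftrightarrow> length xs \<le> k"
  proof
    assume all: "\<forall>i. k \<le> i \<and> i < length xs \<longrightarrow> xs ! i \<le> 0"
    show "length xs \<le> k"
    proof (rule ccontr)
      assume "\<not> length xs \<le> k"
      with all pos show False
        by auto
    qed
  qed auto
qed

lemma G_hook_Suc: "G_hook k (Suc l) = G_hook k l + partition_gf (\<lambda>xs. k < length xs \<and> xs ! k = Suc l)"
proof -
  define B :: "nat \<Rightarrow> nat list \<Rightarrow> bool"
    where "B l = (\<lambda>xs. \<forall>i. k \<le> i \<and> i < length xs \<longrightarrow> xs ! i \<le> l)" for l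
  have "partition_gf (\<lambda>xs. B (Suc l) xs \<and> B l xs) = partition_gf (B l)"
    by (rule partition_gf_cong) (auto simp: B_def)
  moreover have "partition_gf (\<lambda>xs. B (Suc l) xs \<and> \<not> B l xs)
      = partition_gf (\<lambda>xs. k < length xs \<and> xs ! k = Suc l)"
  proof (rule partition_gf_cong)
    fix n xs
    assume p: "is_partition n xs"
    show "B (Suc l) xs \<and> \<not> B l xs \<longleftrightarrow> k < length xs \<and> xs ! k = Suc l"
    proof
      assume "B (Suc l) xs \<and> \<not> B l xs"
      then obtain i where "k \<le> i" "i < length xs" "l < xs ! i" "xs ! k \<le> Suc l"
        by (auto simp: B_def not_le)
      then show "k < length xs \<and> xs ! k = Suc l"
        using is_partition_nth_antimono[OF p, of k i] by simp
    next
      assume "k < length xs \<and> xs ! k = Suc l"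
      then show "B (Suc l) xs \<and> \<not> B l xs"
        using is_partition_nth_antimono[OF p, of k] by (force simp: B_def)
    qed
  qed
  moreover have "G_hook k m = partition_gf (B m)" for m
    by (simp add: G_hook_eq_partition_gf B_def)
  ultimately show ?thesis
    using partition_gf_split[of "B (Suc l)" "B l"] by simp
qed

lemma G_hook_mult_tpoch: "G_hook k l * tpoch (k + l) = A_hook k l"
proof (induction l)
  case 0
  then show ?case
    by (simp add: G_hook_0 partition_gf_length_le_mult_tpoch)
next
  case (Suc l)
  have tpoch_split: "tbinom (k + Suc l) (Suc l) * (tpoch k * tpoch (Suc l)) = tpoch (k + Suc l)"
    using tbinom_mult_tpoch[of "Suc l" "k + Suc l"] by (simp add: mult.commute)
  have "partition_gf (\<lambda>xs. k < length xs \<and> xs ! k = Suc l) * tpoch (k + Suc l)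
      = tbinom (k + Suc l) (Suc l) * (partition_gf (\<lambda>xs. k < length xs \<and> xs ! k = Suc l) * (tpoch k * tpoch (Suc l)))"
    unfolding tpoch_split[symmetric] by (simp only: ac_simps)
  also have "\<dots> = fps_X ^ (Suc l * (k + 1)) * tbinom (k + Suc l) (Suc l)"
    unfolding partition_gf_nth_eq_mult_tpoch[OF zero_less_Suc] by (simp add: mult.commute)
  finally show ?case
    using Suc.IH by (simp add: G_hook_Suc A_hook_Suc tpoch_Suc[of "k + l"] algebra_simps)
qed

theorem theorem3:
  fixes k l :: nat
  shows "G_hook k l = A_hook k l * (\<Prod>i = 1..k + l. inverse (1 - fps_X ^ i))"
proof -
  have "A_hook k l * inverse (tpoch (k + l)) = G_hook k l * (tpoch (k + l) * inverse (tpoch (k + l)))"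
    by (simp flip: G_hook_mult_tpoch)
  then show ?thesis
    unfolding prod_inverse_one_minus_X_power by (simp add: inverse_mult_eq_1')
qed

end
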